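(* Fix $\eta>0$ and $K\ge1$. Let $\hat\lambda$ be the output of the randomized message passing procedure run for $K$ iterations with the EMP update and block distribution uniform over $\{(e,i):e\in E,i\in e\}$. Then $$\mathbb{E}\sum_{e\in E,i\in e}\|S^{\hat\lambda}_{e,i}-\mu^{\hat\lambda}_i\|_1^2\le\frac{8m\eta\,(L(0)-\inf_\lambda L(\lambda))}{K}.$$
   Context: Let $G=(V,E)$ be a finite undirected graph with $n=|V|$, $m=|E|$, every vertex incident to at least one edge; $N_i=\{e\in E:i\in e\}$. $\chi$ is a finite label set with $d=|\chi|\ge2$. Costs $C_i\in\mathbb{R}^\chi$, $C_e\in\mathbb{R}^{\chi^2}$; for $e=\{i,j\}$, $x_e=(x_i,x_j)$, $(x_e)_i=x_i$. Dual variables $\lambda=(\lambda_{e,i}(x))\in\mathbb{R}^{2md}$ and $$L(\lambda)=\frac1\eta\sum_{i\in V}\log\sum_{x\in\chi}\exp\Big(-\eta C_i(x)+\eta\sum_{e\in N_i}\lambda_{e,i}(x)\Big)+\frac1\eta\sum_{e\in E}\log\sum_{x_e\in\chi^2}\exp\Big(-\eta C_e(x_e)-\eta\sum_{i\in e}\lambda_{e,i}((x_e)_i)\Big).$$ $\mu^\lambda_i$, $\mu^\lambda_e$ are the normalized distributions proportional to the exponentials inside the two sums; $S^\lambda_{e,i}(x)=\sum_{x_e:(x_e)_i=x}\mu^\lambda_e(x_e)$; slack $\nu^\lambda_{e,i}=S^\lambda_{e,i}-\mu^\lambda_i$. EMP update at block $(e,i)$: replace $\lambda_{e,i}(x)$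 by $\lambda_{e,i}(x)+\frac{1}{2\eta}\log(S^\lambda_{e,i}(x)/\mu^\lambda_i(x))$, other coordinates unchanged. Randomized message passing procedure: $\lambda^{(0)}=0$; for $k=0,\dots,K-1$, sample a block $b_k$ independently from the given distribution and let $\lambda^{(k+1)}$ be $\lambda^{(k)}$ with block $b_k$ updated by the update rule evaluated at $\lambda^{(k)}$; output $\hat\lambda\in\arg\min_{\lambda\in\{\lambda^{(0)},\dots,\lambda^{(K)}\}}\sum_{e\in E,i\in e}\|\nu^\lambda_{e,i}\|_1^2$. *)

theory Defs
  imports "HOL-Probability.Probability"
begin

text \<open>Graph: vertex set V, edge set E of 2-element subsets of V. A joint label x_e of an edge e is an assignment e \<rightarrow> X
 (element of PiE e (\<lambda>_. X)), so (x_e)_i = x_e i. Dual variables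
 lam e i x = \<lambda>_{e,i}(x).\<close>

definition Nbr :: "'v set set \<Rightarrow> 'v \<Rightarrow> 'v set set" where
  "Nbr E i = {e \<in> E. i \<in> e}"

definition Blocks :: "'v set set \<Rightarrow> ('v set \<times> 'v) set" where
  "Blocks E = {(e, i). e \<in> E \<and> i \<in> e}"

definition edge_labels :: "'l set \<Rightarrow> 'v set \<Rightarrow> ('v \<Rightarrow> 'l) set" where
  "edge_labels X e = PiE e (\<lambda>_. X)"

type_synonym ('v, 'l) dual = "'v set \<Rightarrow> 'v \<Rightarrow> 'l \<Rightarrow> real"

definition node_pot :: "real \<Rightarrow> 'v set set \<Rightarrow> ('v \<Rightarrow> 'l \<Rightarrow> real)
    \<Rightarrow> ('v, 'l) dual \<Rightarrow> 'v \<Rightarrow> 'l \<Rightarrow> real" where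
  "node_pot eta E CV lam i x =
     exp (- eta * CV i x + eta * (\<Sum>e\<in>Nbr E i. lam e i x))"

definition edge_pot :: "real \<Rightarrow> ('v set \<Rightarrow> ('v \<Rightarrow> 'l) \<Rightarrow> real)
    \<Rightarrow> ('v, 'l) dual \<Rightarrow> 'v set \<Rightarrow> ('v \<Rightarrow> 'l) \<Rightarrow> real" where
  "edge_pot eta CE lam e xe =
     exp (- eta * CE e xe - eta * (\<Sum>i\<in>e. lam e i (xe i)))"

definition Ldual :: "real \<Rightarrow> 'v set \<Rightarrow> 'v set set \<Rightarrow> 'l set \<Rightarrow> ('v \<Rightarrow> 'l \<Rightarrow> real)
    \<Rightarrow> ('v set \<Rightarrow> ('v \<Rightarrow> 'l) \<Rightarrow> real) \<Rightarrow> ('v, 'l) dual \<Rightarrow> real" where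
  "Ldual eta V E X CV CE lam =
     (1 / eta) * (\<Sum>i\<in>V. ln (\<Sum>x\<in>X. node_pot eta E CV lam i x))
   + (1 / eta) * (\<Sum>e\<in>E. ln (\<Sum>xe\<in>edge_labels X e. edge_pot eta CE lam e xe))"

definition mu_node :: "real \<Rightarrow> 'v set set \<Rightarrow> 'l set \<Rightarrow> ('v \<Rightarrow> 'l \<Rightarrow> real)
    \<Rightarrow> ('v, 'l) dual \<Rightarrow> 'v \<Rightarrow> 'l \<Rightarrow> real" where
  "mu_node eta E X CV lam i x =
     node_pot eta E CV lam i x / (\<Sum>y\<in>X. node_pot eta E CV lam i y)"

definition mu_edge :: "real \<Rightarrow> 'l set \<Rightarrow> ('v set \<Rightarrow> ('v \<Rightarrow> 'l) \<Rightarrow> real)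
    \<Rightarrow> ('v, 'l) dual \<Rightarrow> 'v set \<Rightarrow> ('v \<Rightarrow> 'l) \<Rightarrow> real" where
  "mu_edge eta X CE lam e xe =
     edge_pot eta CE lam e xe / (\<Sum>ye\<in>edge_labels X e. edge_pot eta CE lam e ye)"

definition Smarg :: "real \<Rightarrow> 'l set \<Rightarrow> ('v set \<Rightarrow> ('v \<Rightarrow> 'l) \<Rightarrow> real)
    \<Rightarrow> ('v, 'l) dual \<Rightarrow> 'v set \<Rightarrow> 'v \<Rightarrow> 'l \<Rightarrow> real" where
  "Smarg eta X CE lam e i x =
     (\<Sum>xe\<in>{xe \<in> edge_labels X e. xe i = x}. mu_edge eta X CE lam e xe)"

definition slack :: "real \<Rightarrow> 'v set set \<Rightarrow> 'l set \<Rightarrow> ('v \<Rightarrow> 'l \<Rightarrow> real)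
    \<Rightarrow> ('v set \<Rightarrow> ('v \<Rightarrow> 'l) \<Rightarrow> real) \<Rightarrow> ('v, 'l) dual \<Rightarrow> 'v set \<Rightarrow> 'v \<Rightarrow> 'l \<Rightarrow> real" where
  "slack eta E X CV CE lam e i x =
     Smarg eta X CE lam e i x - mu_node eta E X CV lam i x"

definition slack_obj :: "real \<Rightarrow> 'v set set \<Rightarrow> 'l set \<Rightarrow> ('v \<Rightarrow> 'l \<Rightarrow> real)
    \<Rightarrow> ('v set \<Rightarrow> ('v \<Rightarrow> 'l) \<Rightarrow> real) \<Rightarrow> ('v, 'l) dual \<Rightarrow> real" where
  "slack_obj eta E X CV CE lam =
     (\<Sum>(e, i)\<in>Blocks E. (\<Sum>x\<in>X. \<bar>slack eta E X CV CE lam e i x\<bar>)\<^sup>2)"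

definition emp_update :: "real \<Rightarrow> 'v set set \<Rightarrow> 'l set \<Rightarrow> ('v \<Rightarrow> 'l \<Rightarrow> real)
    \<Rightarrow> ('v set \<Rightarrow> ('v \<Rightarrow> 'l) \<Rightarrow> real) \<Rightarrow> ('v, 'l) dual \<Rightarrow> 'v set \<times> 'v \<Rightarrow> ('v, 'l) dual" where
  "emp_update eta E X CV CE lam b =
     (case b of (e, i) \<Rightarrow>
       lam(e := (lam e)(i := (\<lambda>x. lam e i x + 1 / (2 * eta) *
          ln (Smarg eta X CE lam e i x / mu_node eta E X CV lam i x)))))"

fun emp_run :: "real \<Rightarrow> 'v set set \<Rightarrow> 'l set \<Rightarrow> ('v \<Rightarrow> 'l \<Rightarrow> real)
    \<Rightarrow> ('v set \<Rightarrow> ('v \<Rightarrow> 'l) \<Rightarrow> real) \<Rightarrow> ('v, 'l) dual \<Rightarrow> ('v set \<times> 'v) list \<Rightarrow> ('v, 'l) dual" where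
  "emp_run eta E X CV CE lam [] = lam"
| "emp_run eta E X CV CE lam (b # bs) = emp_run eta E X CV CE (emp_update eta E X CV CE lam b) bs"

definition iterate :: "real \<Rightarrow> 'v set set \<Rightarrow> 'l set \<Rightarrow> ('v \<Rightarrow> 'l \<Rightarrow> real)
    \<Rightarrow> ('v set \<Rightarrow> ('v \<Rightarrow> 'l) \<Rightarrow> real) \<Rightarrow> ('v set \<times> 'v) list \<Rightarrow> nat \<Rightarrow> ('v, 'l) dual" where
  "iterate eta E X CV CE bs k = emp_run eta E X CV CE (\<lambda>_ _ _. 0) (take k bs)"

text \<open>Law of K i.i.d. uniform block draws: uniform on block sequences of length K.\<close>
definition block_seqs :: "'v set set \<Rightarrow> nat \<Rightarrow> ('v set \<times> 'v) list set" where
  "block_seqs E K = {bs. length bs = K \<and> set bs \<subseteq> Blocks E}"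

end

theory Submission
  imports Defs
begin

text \<open>Updating the block \<open>(e, i)\<close> multiplies both the partition function of node \<open>i\<close> and that
  of edge \<open>e\<close> by the Bhattacharyya coefficient \<open>BC\<close> of \<open>S\<^sub>e\<^sub>,\<^sub>i\<close> and \<open>\<mu>\<^sub>i\<close>, so
  the dual objective changes by exactly \<open>(2/\<eta>) ln BC\<close>. By Cauchy-Schwarz
  \<open>\<parallel>S - \<mu>\<parallel>\<^sub>1\<^sup>2 \<le> 8 (1 - BC) \<le> -8 ln BC\<close>, so every update decreases \<open>L\<close> by at least
  \<open>\<parallel>\<nu>\<^sub>e\<^sub>,\<^sub>i\<parallel>\<^sub>1\<^sup>2 / (4\<eta>)\<close>. A uniformly random block among the \<open>2m\<close> blocks therefore
  decreases \<open>L\<close> in expectation by at least the slack objective over \<open>8m\<eta>\<close>; summing over the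
  \<open>K\<close> steps, the expected slack objectives of the iterates add up to at most
  \<open>8m\<eta> (L(0) - inf L)\<close>, and the selected iterate is no worse than their average.\<close>

definition bhattacharyya :: "'a set \<Rightarrow> ('a \<Rightarrow> real) \<Rightarrow> ('a \<Rightarrow> real) \<Rightarrow> real" where
  "bhattacharyya X p q = (\<Sum>x\<in>X. sqrt (p x) * sqrt (q x))"

lemma bhattacharyya_pos:
  assumes "finite X" "X \<noteq> {}" "\<And>x. x \<in> X \<Longrightarrow> p x > 0" "\<And>x. x \<in> X \<Longrightarrow> q x > 0"
  shows "bhattacharyya X p q > 0"
  unfolding bhattacharyya_def using assms by (intro sum_pos) auto

lemma l1_dist_sq_le_bhattacharyya:
  fixes p q :: "'a \<Rightarrow> real"
  assumes fin: "finite X" and p0: "\<And>x. x \<in> X \<Longrightarrow> p x \<ge> 0" and q0: "\<And>x. x \<in> X \<Longrightarrow> q x \<ge> 0"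
    and p1: "sum p X = 1" and q1: "sum q X = 1"
  shows "(\<Sum>x\<in>X. \<bar>p x - q x\<bar>)\<^sup>2 \<le> 8 * (1 - bhattacharyya X p q)"
proof -
  define B where "B = bhattacharyya X p q"
  have B_sum: "(\<Sum>x\<in>X. sqrt (p x) * sqrt (q x)) = B"
    by (simp add: B_def bhattacharyya_def)
  have factor: "\<bar>p x - q x\<bar> = \<bar>sqrt (p x) - sqrt (q x)\<bar> * (sqrt (p x) + sqrt (q x))" if "x \<in> X" for x
  proof -
    have "p x - q x = (sqrt (p x) - sqrt (q x)) * (sqrt (p x) + sqrt (q x))"
      using p0 q0 that by (simp add: algebra_simps)
    then show ?thesis using p0 q0 that by (simp add: abs_mult)
  qed
  have "(\<Sum>x\<in>X. \<bar>p x - q x\<bar>)\<^sup>2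
      = (\<Sum>x\<in>X. \<bar>sqrt (p x) - sqrt (q x)\<bar> * (sqrt (p x) + sqrt (q x)))\<^sup>2"
    using factor by (simp cong: sum.cong)
  also have "\<dots> \<le> (\<Sum>x\<in>X. \<bar>sqrt (p x) - sqrt (q x)\<bar>\<^sup>2) * (\<Sum>x\<in>X. (sqrt (p x) + sqrt (q x))\<^sup>2)"
    by (rule Cauchy_Schwarz_ineq_sum)
  also have "(\<Sum>x\<in>X. \<bar>sqrt (p x) - sqrt (q x)\<bar>\<^sup>2) = (\<Sum>x\<in>X. p x + q x - 2 * (sqrt (p x) * sqrt (q x)))"
    using p0 q0 by (intro sum.cong) (auto simp: power2_eq_square algebra_simps)
  also have "\<dots> = 2 - 2 * B"
    using p1 q1 B_sum by (simp add: sum.distrib sum_subtractf flip: sum_distrib_left)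
  also have "(\<Sum>x\<in>X. (sqrt (p x) + sqrt (q x))\<^sup>2) = (\<Sum>x\<in>X. p x + q x + 2 * (sqrt (p x) * sqrt (q x)))"
    using p0 q0 by (intro sum.cong) (auto simp: power2_eq_square algebra_simps)
  also have "\<dots> = 2 + 2 * B"
    using p1 q1 B_sum by (simp add: sum.distrib flip: sum_distrib_left)
  also have "(2 - 2 * B) * (2 + 2 * B) \<le> 8 * (1 - B)"
    using zero_le_power2[of "1 - B"] by (simp add: power2_eq_square algebra_simps)
  finally show ?thesis unfolding B_def .
qed

lemma sum_ln_scale_at:
  fixes f g :: "'a \<Rightarrow> real"
  assumes "finite A" "a \<in> A" "f a > 0" "c > 0"
    and "\<And>x. x \<in> A \<Longrightarrow> x \<noteq> a \<Longrightarrow> g x = f x" and "g a = f a * c"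
  shows "(\<Sum>x\<in>A. ln (g x)) = (\<Sum>x\<in>A. ln (f x)) + ln c"
proof -
  have "(\<Sum>x\<in>A. ln (g x)) = ln (g a) + (\<Sum>x\<in>A - {a}. ln (f x))"
    using assms by (simp add: sum.remove)
  also have "ln (g a) = ln (f a) + ln c"
    using assms by (simp add: ln_mult)
  finally show ?thesis
    using assms by (simp add: sum.remove)
qed

lemma exp_half_ln_ratio:
  assumes "eta > 0" "s > 0" "m > 0"
  shows "exp (eta * (1 / (2 * eta) * ln (s / m))) = sqrt s / sqrt m"
proof -
  have "exp (eta * (1 / (2 * eta) * ln (s / m))) = (s / m) powr (1 / 2)"
    using assms by (simp add: powr_def)
  then show ?thesis
    using assms by (simp add: powr_half_sqrt real_sqrt_divide)
qed

lemma node_pot_shift_block: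
  assumes "finite (Nbr E i)" "e \<in> Nbr E i"
  shows "node_pot eta E CV (lam(e := (lam e)(i := \<lambda>x. lam e i x + \<delta> x))) i x
       = node_pot eta E CV lam i x * exp (eta * \<delta> x)"
proof -
  have "(\<Sum>e'\<in>Nbr E i. (lam(e := (lam e)(i := \<lambda>x. lam e i x + \<delta> x))) e' i x)
      = (\<Sum>e'\<in>Nbr E i. lam e' i x + (if e' = e then \<delta> x else 0))"
    by (intro sum.cong) auto
  also have "\<dots> = (\<Sum>e'\<in>Nbr E i. lam e' i x) + \<delta> x"
    using assms by (simp add: sum.distrib)
  finally show ?thesis
    by (simp add: node_pot_def distrib_left exp_add[symmetric] algebra_simps)
qed

lemma node_pot_update_other:
  "j \<noteq> i \<Longrightarrow> node_pot eta E CV (lam(e := (lam e)(i := f))) j = node_pot eta E CV lam j"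
  unfolding node_pot_def by (auto intro!: ext sum.cong)

lemma edge_pot_shift_block:
  assumes "finite e" "i \<in> e"
  shows "edge_pot eta CE (lam(e := (lam e)(i := \<lambda>x. lam e i x + \<delta> x))) e xe
       = edge_pot eta CE lam e xe * exp (- eta * \<delta> (xe i))"
proof -
  have "(\<Sum>j\<in>e. (lam(e := (lam e)(i := \<lambda>x. lam e i x + \<delta> x))) e j (xe j))
      = (\<Sum>j\<in>e. lam e j (xe j) + (if j = i then \<delta> (xe i) else 0))"
    by (intro sum.cong) auto
  also have "\<dots> = (\<Sum>j\<in>e. lam e j (xe j)) + \<delta> (xe i)"
    using assms by (simp add: sum.distrib)
  finally show ?thesis
    by (simp add: edge_pot_def exp_add[symmetric] algebra_simps)
qed

lemma edge_pot_update_other: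
  "e' \<noteq> e \<Longrightarrow> edge_pot eta CE (lam(e := g)) e' = edge_pot eta CE lam e'"
  unfolding edge_pot_def by simp

lemma sum_lists_length_Suc:
  assumes "finite A"
  shows "(\<Sum>bs\<in>{bs. length bs = Suc K \<and> set bs \<subseteq> A}. f bs)
       = (\<Sum>a\<in>A. \<Sum>bs\<in>{bs. length bs = K \<and> set bs \<subseteq> A}. f (a # bs))"
proof -
  have "{bs. length bs = Suc K \<and> set bs \<subseteq> A}
      = (\<lambda>(a, bs). a # bs) ` (A \<times> {bs. length bs = K \<and> set bs \<subseteq> A})"
    by (auto simp: length_Suc_conv)
  moreover have "inj_on (\<lambda>(a, bs). a # bs) (A \<times> {bs. length bs = K \<and> set bs \<subseteq> A})"
    by (auto simp: inj_on_def)
  ultimately show ?thesis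
    by (simp add: sum.reindex sum.cartesian_product prod.case_distrib)
qed

text \<open>Summing over all length-\<open>K\<close> sequences in \<open>A\<close> is \<open>card A ^ K\<close> times the expectation
  over \<open>K\<close> independent uniform draws from \<open>A\<close>.\<close>

lemma random_block_descent:
  fixes F G :: "'s \<Rightarrow> real" and u :: "'s \<Rightarrow> 'b \<Rightarrow> 's"
  assumes A: "finite A"
    and decrease: "\<And>s. (\<Sum>b\<in>A. F (u s b)) \<le> card A * (F s - G s)"
  shows "(\<Sum>bs\<in>{bs. length bs = K \<and> set bs \<subseteq> A}. \<Sum>k<K. G (foldl u s (take k bs)))
       \<le> real (card A) ^ K * F s - (\<Sum>bs\<in>{bs. length bs = K \<and> set bs \<subseteq> A}. F (foldl u s bs))"
proof (induction K arbitrary: s)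
  case 0
  have "{bs. length bs = 0 \<and> set bs \<subseteq> A} = {[]}" by auto
  then show ?case by simp
next
  case (Suc K)
  let ?n = "real (card A)"
  define Ls where "Ls = {bs. length bs = K \<and> set bs \<subseteq> A}"
  have card_Ls: "card Ls = card A ^ K"
    using card_lists_length_eq[OF A, of K] by (simp add: Ls_def conj_commute)
  have "(\<Sum>bs\<in>{bs. length bs = Suc K \<and> set bs \<subseteq> A}. \<Sum>k<Suc K. G (foldl u s (take k bs)))
      = (\<Sum>b\<in>A. \<Sum>bs\<in>Ls. G s + (\<Sum>k<K. G (foldl u (u s b) (take k bs))))"
    unfolding sum_lists_length_Suc[OF A] sum.lessThan_Suc_shift by (simp add: Ls_def)
  also have "\<dots> = ?n ^ Suc K * G s + (\<Sum>b\<in>A. \<Sum>bs\<in>Ls. \<Sum>k<K. G (foldl u (u s b) (take k bs)))"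
    by (simp add: sum.distrib card_Ls)
  also have "\<dots> \<le> ?n ^ Suc K * G s + (\<Sum>b\<in>A. ?n ^ K * F (u s b) - (\<Sum>bs\<in>Ls. F (foldl u (u s b) bs)))"
    using Suc.IH by (intro add_left_mono sum_mono) (simp add: Ls_def)
  also have "\<dots> = ?n ^ Suc K * G s + ?n ^ K * (\<Sum>b\<in>A. F (u s b))
      - (\<Sum>bs\<in>{bs. length bs = Suc K \<and> set bs \<subseteq> A}. F (foldl u s bs))"
    unfolding sum_lists_length_Suc[OF A] by (simp add: Ls_def sum_subtractf sum_distrib_left)
  also have "\<dots> \<le> ?n ^ Suc K * G s + ?n ^ K * (?n * (F s - G s))
      - (\<Sum>bs\<in>{bs. length bs = Suc K \<and> set bs \<subseteq> A}. F (foldl u s bs))"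
    using decrease[of s] by (intro diff_right_mono add_left_mono mult_left_mono) auto
  finally show ?case by (simp add: algebra_simps)
qed

lemma emp_run_eq_foldl:
  "emp_run eta E X CV CE lam bs = foldl (emp_update eta E X CV CE) lam bs"
  by (induction bs arbitrary: lam) simp_all

lemma sum_Nbr_swap:
  assumes "finite V" "finite E" "\<And>e. e \<in> E \<Longrightarrow> e \<subseteq> V"
  shows "(\<Sum>j\<in>V. \<Sum>e\<in>Nbr E j. h e j) = (\<Sum>e\<in>E. \<Sum>j\<in>e. h e j)"
proof -
  have "(\<Sum>j\<in>V. \<Sum>e\<in>Nbr E j. h e j) = (\<Sum>e\<in>E. \<Sum>j\<in>{j \<in> V. j \<in> e}. h e j)"
    unfolding Nbr_def using assms by (intro sum.swap_restrict)
  also have "\<dots> = (\<Sum>e\<in>E. \<Sum>j\<in>e. h e j)"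
    using assms by (intro sum.cong refl) blast
  finally show ?thesis .
qed

lemma card_Blocks:
  assumes "finite E" "\<And>e. e \<in> E \<Longrightarrow> card e = 2"
  shows "card (Blocks E) = 2 * card E"
proof -
  have "Blocks E = Sigma E (\<lambda>e. e)" by (auto simp: Blocks_def)
  moreover have "\<And>e. e \<in> E \<Longrightarrow> finite e"
    using assms(2) card.infinite by fastforce
  ultimately show ?thesis
    using assms by (simp add: card_SigmaI)
qed

definition emp_increment :: "real \<Rightarrow> 'v set set \<Rightarrow> 'l set \<Rightarrow> ('v \<Rightarrow> 'l \<Rightarrow> real)
    \<Rightarrow> ('v set \<Rightarrow> ('v \<Rightarrow> 'l) \<Rightarrow> real) \<Rightarrow> ('v, 'l) dual \<Rightarrow> 'v set \<Rightarrow> 'v \<Rightarrow> 'l \<Rightarrow> real" where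
  "emp_increment eta E X CV CE lam e i x =
     1 / (2 * eta) * ln (Smarg eta X CE lam e i x / mu_node eta E X CV lam i x)"

lemma emp_update_eq_increment:
  "emp_update eta E X CV CE lam (e, i)
     = lam(e := (lam e)(i := \<lambda>x. lam e i x + emp_increment eta E X CV CE lam e i x))"
  by (simp add: emp_update_def emp_increment_def)

locale emp_setting =
  fixes eta :: real and V :: "'v set" and E :: "'v set set" and X :: "'l set"
    and CV :: "'v \<Rightarrow> 'l \<Rightarrow> real" and CE :: "'v set \<Rightarrow> ('v \<Rightarrow> 'l) \<Rightarrow> real"
  assumes finite_V: "finite V" and edges_subset: "\<And>e. e \<in> E \<Longrightarrow> e \<subseteq> V"
    and finite_X: "finite X" and X_nonempty: "X \<noteq> {}" and eta_pos: "eta > 0"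
begin

lemma finite_E: "finite E"
  using finite_subset[of E "Pow V"] edges_subset finite_V by auto

lemma finite_edge: "e \<in> E \<Longrightarrow> finite e"
  using edges_subset finite_V finite_subset by blast

lemma finite_edge_labels: "e \<in> E \<Longrightarrow> finite (edge_labels X e)"
  unfolding edge_labels_def using finite_edge finite_X by (simp add: finite_PiE)

lemma finite_Blocks: "finite (Blocks E)"
proof -
  have "Blocks E = Sigma E (\<lambda>e. e)" by (auto simp: Blocks_def)
  then show ?thesis using finite_E finite_edge by auto
qed

lemma const_label_in_edge_labels: "x \<in> X \<Longrightarrow> restrict (\<lambda>_. x) e \<in> edge_labels X e"
  by (simp add: edge_labels_def)

lemma node_partition_pos: "(\<Sum>x\<in>X. node_pot eta E CV lam i x) > 0"
  using finite_X X_nonempty by (intro sum_pos) (auto simp: node_pot_def)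

lemma mu_node_pos: "mu_node eta E X CV lam i x > 0"
  using node_partition_pos by (simp add: mu_node_def node_pot_def)

lemma sum_mu_node: "(\<Sum>x\<in>X. mu_node eta E X CV lam i x) = 1"
  using node_partition_pos[of lam i] by (simp add: mu_node_def flip: sum_divide_distrib)

lemma edge_partition_pos:
  assumes "e \<in> E"
  shows "(\<Sum>xe\<in>edge_labels X e. edge_pot eta CE lam e xe) > 0"
proof -
  obtain x where "x \<in> X" using X_nonempty by blast
  then show ?thesis
    using finite_edge_labels[OF assms] const_label_in_edge_labels
    by (intro sum_pos) (auto simp: edge_pot_def)
qed

lemma mu_edge_pos: "e \<in> E \<Longrightarrow> mu_edge eta X CE lam e xe > 0"
  using edge_partition_pos by (simp add: mu_edge_def edge_pot_def)

lemma sum_Smarg_weighted: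
  assumes "e \<in> E" "i \<in> e"
  shows "(\<Sum>x\<in>X. Smarg eta X CE lam e i x * h x)
       = (\<Sum>xe\<in>edge_labels X e. mu_edge eta X CE lam e xe * h (xe i))"
proof -
  have "(\<Sum>x\<in>X. Smarg eta X CE lam e i x * h x)
      = (\<Sum>x\<in>X. \<Sum>xe\<in>{xe \<in> edge_labels X e. xe i = x}. mu_edge eta X CE lam e xe * h (xe i))"
    unfolding Smarg_def sum_distrib_right by (intro sum.cong) auto
  also have "\<dots> = (\<Sum>xe\<in>edge_labels X e. mu_edge eta X CE lam e xe * h (xe i))"
    using assms finite_edge_labels finite_X
    by (intro sum.group) (auto simp: edge_labels_def)
  finally show ?thesis .
qed

lemma sum_Smarg:
  assumes "e \<in> E" "i \<in> e"
  shows "(\<Sum>x\<in>X. Smarg eta X CE lam e i x) = 1"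
proof -
  have "(\<Sum>xe\<in>edge_labels X e. edge_pot eta CE lam e xe) \<noteq> 0"
    using edge_partition_pos[OF assms(1)] by (simp add: less_imp_neq[THEN not_sym])
  then show ?thesis
    using sum_Smarg_weighted[OF assms, of lam "\<lambda>_. 1"]
    by (simp add: mu_edge_def flip: sum_divide_distrib)
qed

lemma Smarg_pos:
  assumes "e \<in> E" "i \<in> e" "x \<in> X"
  shows "Smarg eta X CE lam e i x > 0"
  unfolding Smarg_def using assms finite_edge_labels const_label_in_edge_labels mu_edge_pos
  by (intro sum_pos) (auto intro!: exI[of _ "restrict (\<lambda>_. x) e"])

lemma exp_emp_increment:
  assumes "e \<in> E" "i \<in> e" "x \<in> X"
  shows "exp (eta * emp_increment eta E X CV CE lam e i x)
       = sqrt (Smarg eta X CE lam e i x) / sqrt (mu_node eta E X CV lam i x)"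
  unfolding emp_increment_def
  using exp_half_ln_ratio[OF eta_pos Smarg_pos[OF assms] mu_node_pos] .

lemma node_partition_emp_update:
  assumes e: "e \<in> E" and i: "i \<in> e"
  shows "(\<Sum>x\<in>X. node_pot eta E CV (emp_update eta E X CV CE lam (e, i)) i x)
       = (\<Sum>x\<in>X. node_pot eta E CV lam i x)
           * bhattacharyya X (Smarg eta X CE lam e i) (mu_node eta E X CV lam i)"
proof -
  define S where "S = Smarg eta X CE lam e i"
  define mu where "mu = mu_node eta E X CV lam i"
  define Z where "Z = (\<Sum>x\<in>X. node_pot eta E CV lam i x)"
  have "node_pot eta E CV (emp_update eta E X CV CE lam (e, i)) i x = Z * (sqrt (S x) * sqrt (mu x))"
    if "x \<in> X" for x
  proof -
    have "node_pot eta E CV (emp_update eta E X CV CE lam (e, i)) i x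
        = Z * (sqrt (S x) * (mu x / sqrt (mu x)))"
      using finite_E e i node_partition_pos[of lam i] exp_emp_increment[OF e i that]
      by (simp add: emp_update_eq_increment node_pot_shift_block Nbr_def mu_node_def S_def mu_def Z_def)
    then show ?thesis
      using mu_node_pos[of lam i x] by (simp add: mu_def real_div_sqrt)
  qed
  then show ?thesis
    by (simp add: S_def mu_def Z_def bhattacharyya_def sum_distrib_left mult.commute)
qed

lemma edge_partition_emp_update:
  assumes e: "e \<in> E" and i: "i \<in> e"
  shows "(\<Sum>xe\<in>edge_labels X e. edge_pot eta CE (emp_update eta E X CV CE lam (e, i)) e xe)
       = (\<Sum>xe\<in>edge_labels X e. edge_pot eta CE lam e xe)
           * bhattacharyya X (Smarg eta X CE lam e i) (mu_node eta E X CV lam i)"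
proof -
  define S where "S = Smarg eta X CE lam e i"
  define mu where "mu = mu_node eta E X CV lam i"
  define Z where "Z = (\<Sum>xe\<in>edge_labels X e. edge_pot eta CE lam e xe)"
  have "(\<Sum>xe\<in>edge_labels X e. edge_pot eta CE (emp_update eta E X CV CE lam (e, i)) e xe)
      = Z * (\<Sum>xe\<in>edge_labels X e. mu_edge eta X CE lam e xe * (sqrt (mu (xe i)) / sqrt (S (xe i))))"
    unfolding sum_distrib_left
  proof (intro sum.cong refl)
    fix xe assume "xe \<in> edge_labels X e"
    then have "xe i \<in> X" using i by (auto simp: edge_labels_def)
    then have "exp (- eta * emp_increment eta E X CV CE lam e i (xe i)) = sqrt (mu (xe i)) / sqrt (S (xe i))"
      using exp_emp_increment[OF e i] Smarg_pos[OF e i] mu_node_pos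
      by (simp add: exp_minus S_def mu_def)
    then show "edge_pot eta CE (emp_update eta E X CV CE lam (e, i)) e xe
        = Z * (mu_edge eta X CE lam e xe * (sqrt (mu (xe i)) / sqrt (S (xe i))))"
      using edge_partition_pos[OF e, of lam] finite_edge[OF e] i
      by (simp add: emp_update_eq_increment edge_pot_shift_block mu_edge_def Z_def)
  qed
  also have "\<dots> = Z * (\<Sum>x\<in>X. S x * (sqrt (mu x) / sqrt (S x)))"
    unfolding S_def sum_Smarg_weighted[OF e i] ..
  also have "\<dots> = Z * bhattacharyya X S mu"
  proof -
    have "S x * (sqrt (mu x) / sqrt (S x)) = sqrt (S x) * sqrt (mu x)" if "x \<in> X" for x
    proof -
      have "S x * (sqrt (mu x) / sqrt (S x)) = S x / sqrt (S x) * sqrt (mu x)" by simp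
      moreover have "S x > 0" using Smarg_pos[OF e i that] by (simp add: S_def)
      ultimately show ?thesis by (simp add: real_div_sqrt)
    qed
    then show ?thesis by (simp add: bhattacharyya_def)
  qed
  finally show ?thesis by (simp add: S_def mu_def Z_def)
qed

lemma Ldual_emp_update:
  assumes e: "e \<in> E" and i: "i \<in> e"
  shows "Ldual eta V E X CV CE (emp_update eta E X CV CE lam (e, i))
       = Ldual eta V E X CV CE lam
           + 2 / eta * ln (bhattacharyya X (Smarg eta X CE lam e i) (mu_node eta E X CV lam i))"
proof -
  let ?lam' = "emp_update eta E X CV CE lam (e, i)"
  let ?B = "bhattacharyya X (Smarg eta X CE lam e i) (mu_node eta E X CV lam i)"
  have B_pos: "?B > 0"
    using finite_X X_nonempty Smarg_pos[OF e i] mu_node_pos by (rule bhattacharyya_pos)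
  have "i \<in> V"
    using e i edges_subset by auto
  have node_other: "node_pot eta E CV ?lam' j = node_pot eta E CV lam j" if "j \<noteq> i" for j
    using that by (simp add: emp_update_eq_increment node_pot_update_other)
  have edge_other: "edge_pot eta CE ?lam' e' = edge_pot eta CE lam e'" if "e' \<noteq> e" for e'
    using that by (simp add: emp_update_eq_increment edge_pot_update_other)
  have "(\<Sum>j\<in>V. ln (\<Sum>x\<in>X. node_pot eta E CV ?lam' j x))
      = (\<Sum>j\<in>V. ln (\<Sum>x\<in>X. node_pot eta E CV lam j x)) + ln ?B"
  proof (rule sum_ln_scale_at[where a = i])
    fix j assume "j \<in> V" "j \<noteq> i"
    then show "(\<Sum>x\<in>X. node_pot eta E CV ?lam' j x) = (\<Sum>x\<in>X. node_pot eta E CV lam j x)"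
      using node_other by simp
  qed (simp_all add: finite_V \<open>i \<in> V\<close> node_partition_pos B_pos node_partition_emp_update[OF e i])
  moreover have "(\<Sum>e'\<in>E. ln (\<Sum>xe\<in>edge_labels X e'. edge_pot eta CE ?lam' e' xe))
      = (\<Sum>e'\<in>E. ln (\<Sum>xe\<in>edge_labels X e'. edge_pot eta CE lam e' xe)) + ln ?B"
  proof (rule sum_ln_scale_at[where a = e])
    fix e' assume "e' \<in> E" "e' \<noteq> e"
    then show "(\<Sum>xe\<in>edge_labels X e'. edge_pot eta CE ?lam' e' xe)
        = (\<Sum>xe\<in>edge_labels X e'. edge_pot eta CE lam e' xe)"
      using edge_other by simp
  qed (simp_all add: finite_E e edge_partition_pos B_pos edge_partition_emp_update[OF e i])
  ultimately show ?thesis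
    by (simp add: Ldual_def add_divide_distrib algebra_simps)
qed

lemma Ldual_emp_update_le:
  assumes "e \<in> E" "i \<in> e"
  shows "Ldual eta V E X CV CE (emp_update eta E X CV CE lam (e, i))
       \<le> Ldual eta V E X CV CE lam - (\<Sum>x\<in>X. \<bar>slack eta E X CV CE lam e i x\<bar>)\<^sup>2 / (4 * eta)"
proof -
  define S where "S = Smarg eta X CE lam e i"
  define mu where "mu = mu_node eta E X CV lam i"
  have "bhattacharyya X S mu > 0"
    using finite_X X_nonempty Smarg_pos[OF assms] mu_node_pos
    by (intro bhattacharyya_pos) (simp_all add: S_def mu_def)
  then have "1 - bhattacharyya X S mu \<le> - ln (bhattacharyya X S mu)"
    using ln_le_minus_one by (simp add: algebra_simps)
  moreover have "(\<Sum>x\<in>X. \<bar>S x - mu x\<bar>)\<^sup>2 \<le> 8 * (1 - bhattacharyya X S mu)"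
    using finite_X Smarg_pos[OF assms] mu_node_pos sum_Smarg[OF assms] sum_mu_node
    by (intro l1_dist_sq_le_bhattacharyya) (simp_all add: S_def mu_def less_imp_le)
  ultimately have "(\<Sum>x\<in>X. \<bar>S x - mu x\<bar>)\<^sup>2 / (4 * eta) \<le> - (2 / eta * ln (bhattacharyya X S mu))"
    using eta_pos by (simp add: field_simps)
  then show ?thesis
    using Ldual_emp_update[OF assms, of lam] by (simp add: slack_def S_def mu_def)
qed

lemma sum_Ldual_emp_update_le:
  "(\<Sum>b\<in>Blocks E. Ldual eta V E X CV CE (emp_update eta E X CV CE lam b))
     \<le> card (Blocks E) * (Ldual eta V E X CV CE lam
          - slack_obj eta E X CV CE lam / (4 * eta * card (Blocks E)))"
proof (cases "Blocks E = {}")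
  case True
  then show ?thesis by simp
next
  case False
  have "(\<Sum>b\<in>Blocks E. Ldual eta V E X CV CE (emp_update eta E X CV CE lam b))
      \<le> (\<Sum>(e, i)\<in>Blocks E. Ldual eta V E X CV CE lam
            - (\<Sum>x\<in>X. \<bar>slack eta E X CV CE lam e i x\<bar>)\<^sup>2 / (4 * eta))"
    by (intro sum_mono) (auto simp: Blocks_def intro: Ldual_emp_update_le)
  also have "\<dots> = card (Blocks E) * Ldual eta V E X CV CE lam - slack_obj eta E X CV CE lam / (4 * eta)"
    by (simp add: case_prod_unfold sum_subtractf slack_obj_def flip: sum_divide_distrib)
  finally show ?thesis
    using False finite_Blocks by (simp add: right_diff_distrib)
qed

lemma Ldual_lower_bound:
  assumes "x0 \<in> X"
  shows "(\<Sum>j\<in>V. - CV j x0) + (\<Sum>e\<in>E. - CE e (restrict (\<lambda>_. x0) e)) \<le> Ldual eta V E X CV CE lam"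
proof -
  txt \<open>Keep only the constant labelling \<open>x0\<close> in every partition function: each
    \<open>\<lambda>\<^sub>e\<^sub>,\<^sub>j(x0)\<close> then occurs once with each sign and \<open>P\<close> cancels.\<close>
  define P where "P = (\<Sum>e\<in>E. \<Sum>j\<in>e. lam e j x0)"
  have node: "- eta * CV j x0 + eta * (\<Sum>e\<in>Nbr E j. lam e j x0) \<le> ln (\<Sum>x\<in>X. node_pot eta E CV lam j x)"
    for j
  proof -
    have "node_pot eta E CV lam j x0 \<le> (\<Sum>x\<in>X. node_pot eta E CV lam j x)"
      using assms finite_X by (intro member_le_sum) (simp_all add: node_pot_def)
    then have "ln (node_pot eta E CV lam j x0) \<le> ln (\<Sum>x\<in>X. node_pot eta E CV lam j x)"
      by (rule ln_mono) (simp add: node_pot_def)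
    then show ?thesis by (simp add: node_pot_def)
  qed
  have edge: "- eta * CE e (restrict (\<lambda>_. x0) e) - eta * (\<Sum>j\<in>e. lam e j x0)
      \<le> ln (\<Sum>xe\<in>edge_labels X e. edge_pot eta CE lam e xe)" if "e \<in> E" for e
  proof -
    have "edge_pot eta CE lam e (restrict (\<lambda>_. x0) e) \<le> (\<Sum>xe\<in>edge_labels X e. edge_pot eta CE lam e xe)"
      by (rule member_le_sum[OF const_label_in_edge_labels[OF assms] _ finite_edge_labels[OF that]])
        (simp add: edge_pot_def)
    then have "ln (edge_pot eta CE lam e (restrict (\<lambda>_. x0) e))
        \<le> ln (\<Sum>xe\<in>edge_labels X e. edge_pot eta CE lam e xe)"
      by (rule ln_mono) (simp add: edge_pot_def)
    then show ?thesis by (simp add: edge_pot_def)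
  qed
  have "(\<Sum>j\<in>V. - eta * CV j x0 + eta * (\<Sum>e\<in>Nbr E j. lam e j x0))
      \<le> (\<Sum>j\<in>V. ln (\<Sum>x\<in>X. node_pot eta E CV lam j x))"
    by (rule sum_mono) (rule node)
  moreover have "(\<Sum>j\<in>V. - eta * CV j x0 + eta * (\<Sum>e\<in>Nbr E j. lam e j x0))
      = eta * (\<Sum>j\<in>V. - CV j x0) + eta * P"
    unfolding sum.distrib P_def
    by (simp add: sum_distrib_left sum_Nbr_swap[OF finite_V finite_E edges_subset])
  ultimately have "eta * (\<Sum>j\<in>V. - CV j x0) + eta * P
      \<le> (\<Sum>j\<in>V. ln (\<Sum>x\<in>X. node_pot eta E CV lam j x))"
    by simp
  moreover have "eta * (\<Sum>e\<in>E. - CE e (restrict (\<lambda>_. x0) e)) - eta * P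
      \<le> (\<Sum>e\<in>E. ln (\<Sum>xe\<in>edge_labels X e. edge_pot eta CE lam e xe))"
    using sum_mono[of E _ "\<lambda>e. ln (\<Sum>xe\<in>edge_labels X e. edge_pot eta CE lam e xe)", OF edge]
    by (simp add: P_def sum_subtractf sum_distrib_left)
  ultimately show ?thesis
    using eta_pos unfolding Ldual_def by (simp add: field_simps)
qed

lemma bdd_below_Ldual: "bdd_below (range (Ldual eta V E X CV CE))"
proof -
  obtain x0 where "x0 \<in> X" using X_nonempty by blast
  then show ?thesis by (auto intro: bdd_belowI Ldual_lower_bound)
qed

lemma sum_slack_obj_iterates_le:
  "(\<Sum>bs\<in>block_seqs E K. \<Sum>k<K. slack_obj eta E X CV CE (iterate eta E X CV CE bs k))
     \<le> 4 * eta * real (card (Blocks E)) * real (card (Blocks E)) ^ K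
         * (Ldual eta V E X CV CE (\<lambda>_ _ _. 0) - (INF lam. Ldual eta V E X CV CE lam))"
proof -
  let ?n = "real (card (Blocks E))"
  let ?L = "Ldual eta V E X CV CE"
  let ?run = "foldl (emp_update eta E X CV CE) (\<lambda>_ _ _. 0)"
  have "(\<Sum>bs\<in>block_seqs E K. \<Sum>k<K. slack_obj eta E X CV CE (?run (take k bs)) / (4 * eta * ?n))
      \<le> ?n ^ K * ?L (\<lambda>_ _ _. 0) - (\<Sum>bs\<in>block_seqs E K. ?L (?run bs))"
    unfolding block_seqs_def
    by (rule random_block_descent[where F = ?L and u = "emp_update eta E X CV CE"
          and G = "\<lambda>lam. slack_obj eta E X CV CE lam / (4 * eta * ?n)"])
      (rule finite_Blocks, rule sum_Ldual_emp_update_le)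
  moreover have "?n ^ K * (INF lam. ?L lam) \<le> (\<Sum>bs\<in>block_seqs E K. ?L (?run bs))"
  proof -
    have "card (block_seqs E K) = card (Blocks E) ^ K"
      using card_lists_length_eq[OF finite_Blocks] by (simp add: block_seqs_def conj_commute)
    moreover have "(\<Sum>bs\<in>block_seqs E K. (INF lam. ?L lam)) \<le> (\<Sum>bs\<in>block_seqs E K. ?L (?run bs))"
      by (intro sum_mono cINF_lower[OF bdd_below_Ldual]) simp
    ultimately show ?thesis by simp
  qed
  ultimately have "(\<Sum>bs\<in>block_seqs E K. \<Sum>k<K. slack_obj eta E X CV CE (?run (take k bs))) / (4 * eta * ?n)
      \<le> ?n ^ K * (?L (\<lambda>_ _ _. 0) - (INF lam. ?L lam))"
    by (simp add: sum_divide_distrib right_diff_distrib)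
  moreover have "?n > 0" if "Blocks E \<noteq> {}"
    using that finite_Blocks by (simp add: card_gt_0_iff)
  ultimately show ?thesis
    using eta_pos
    by (cases "Blocks E = {}") (simp_all add: slack_obj_def iterate_def emp_run_eq_foldl field_simps)
qed

end

theorem lemma8:
  fixes V :: "'v set" and E :: "'v set set" and X :: "'l set"
    and CV :: "'v \<Rightarrow> 'l \<Rightarrow> real" and CE :: "'v set \<Rightarrow> ('v \<Rightarrow> 'l) \<Rightarrow> real"
    and eta :: real and K :: nat
    and sel :: "('v set \<times> 'v) list \<Rightarrow> nat"
  assumes finV: "finite V"
    and edges: "\<forall>e\<in>E. e \<subseteq> V \<and> card e = 2"
    and cover: "\<forall>i\<in>V. \<exists>e\<in>E. i \<in> e"
    and finX: "finite X" and cardX: "card X \<ge> 2"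
    and eta: "eta > 0" and K: "K \<ge> 1"
    and sel_range: "\<forall>bs \<in> block_seqs E K. sel bs \<le> K"
    and sel_argmin: "\<forall>bs \<in> block_seqs E K. \<forall>k \<le> K.
          slack_obj eta E X CV CE (iterate eta E X CV CE bs (sel bs))
            \<le> slack_obj eta E X CV CE (iterate eta E X CV CE bs k)"
  shows "measure_pmf.expectation (pmf_of_set (block_seqs E K))
           (\<lambda>bs. slack_obj eta E X CV CE (iterate eta E X CV CE bs (sel bs)))
         \<le> 8 * real (card E) * eta
             * (Ldual eta V E X CV CE (\<lambda>_ _ _. 0) - (INF lam. Ldual eta V E X CV CE lam))
             / real K"
proof (cases "E = {}")
  case True
  then show ?thesis by (simp add: slack_obj_def Blocks_def)
next
  case False
  interpret emp_setting eta V E X CV CE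
    using finV edges finX cardX eta by unfold_locales auto
  let ?f = "\<lambda>bs. slack_obj eta E X CV CE (iterate eta E X CV CE bs (sel bs))"
  let ?D = "Ldual eta V E X CV CE (\<lambda>_ _ _. 0) - (INF lam. Ldual eta V E X CV CE lam)"
  let ?n = "card (Blocks E)"
  have n: "?n = 2 * card E" and n_pos: "?n > 0"
    using card_Blocks[OF finite_E] edges False finite_E by auto
  have card_seqs: "card (block_seqs E K) = ?n ^ K"
    using card_lists_length_eq[OF finite_Blocks] by (simp add: block_seqs_def conj_commute)
  then have "finite (block_seqs E K)" and "block_seqs E K \<noteq> {}"
    using n_pos card.infinite by fastforce+
  have "real K * ?f bs \<le> (\<Sum>k<K. slack_obj eta E X CV CE (iterate eta E X CV CE bs k))"
    if "bs \<in> block_seqs E K" for bs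
    using sum_bounded_below[of "{..<K}" "?f bs"] sel_argmin that by simp
  then have "real K * (\<Sum>bs\<in>block_seqs E K. ?f bs)
      \<le> (\<Sum>bs\<in>block_seqs E K. \<Sum>k<K. slack_obj eta E X CV CE (iterate eta E X CV CE bs k))"
    unfolding sum_distrib_left by (rule sum_mono)
  also have "\<dots> \<le> 4 * eta * real ?n * real ?n ^ K * ?D"
    by (rule sum_slack_obj_iterates_le)
  also have "\<dots> = 8 * real (card E) * eta * ?D * real (card (block_seqs E K))"
    by (simp add: n card_seqs)
  finally have "(\<Sum>bs\<in>block_seqs E K. ?f bs) / real (card (block_seqs E K))
      \<le> 8 * real (card E) * eta * ?D / real K"
    using K n_pos by (simp add: card_seqs field_simps)
  then show ?thesis
    using \<open>finite (block_seqs E K)\<close> \<open>block_seqs E K \<noteq> {}\<close> by (simp add: integral_pmf_of_set)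
qed

end
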